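(* Let $(\Omega,\mathcal A)$ be a measurable space, let $A$ be a uniform algebra on a compact metric space $K$ with maximal ideal space $M$, and let $f:\Omega\times K\to\mathbb C$ satisfy $f(\omega,\cdot)\in A$ for all $\omega$ and $f(\cdot,z)$ measurable for all $z\in K$. Then the Gelfand transform $\widehat f:\Omega\times M\to\mathbb C$, $\widehat f(\omega,\phi)=\phi(f(\omega,\cdot))$, is a random continuous function on $M$, i.e. $\widehat f(\cdot,\phi)$ is measurable for each $\phi\in M$ and $\widehat f(\omega,\cdot)$ is continuous on $M$ for each $\omega$.
   Context: A uniform algebra on $K$ is a closed subalgebra of $C(K)$ with the sup norm containing the constants and separating points; $M$ is the set of nonzero multiplicative linear functionals on $A$ with the Gelfand (weak-* ) topology. *)

theory Defs
  imports "HOL-Analysis.Analysis" "HOL-Probability.Probability"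
begin

text \<open>The compact metric space K is taken to be the (whole) carrier of a metric type 'k
  with compact UNIV.  C(K) is then the set of continuous functions 'k => complex,
  with the sup norm (closedness = closed under uniform limits).\<close>

definition uniform_algebra :: "('k::metric_space \<Rightarrow> complex) set \<Rightarrow> bool" where
  "uniform_algebra A \<longleftrightarrow>
     A \<subseteq> {g. continuous_on UNIV g}
   \<and> (\<forall>f\<in>A. \<forall>g\<in>A. (\<lambda>x. f x + g x) \<in> A)
   \<and> (\<forall>f\<in>A. \<forall>c. (\<lambda>x. c * f x) \<in> A)
   \<and> (\<forall>f\<in>A. \<forall>g\<in>A. (\<lambda>x. f x * g x) \<in> A)
   \<and> (\<forall>c. (\<lambda>_. c) \<in> A)
   \<and> (\<forall>x y. x \<noteq> y \<longrightarrow> (\<exists>g\<in>A. g x \<noteq> g y))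
   \<and> (\<forall>s g. (\<forall>n. s n \<in> A) \<and> uniform_limit UNIV s g sequentially \<longrightarrow> g \<in> A)"

text \<open>Maximal ideal space: nonzero multiplicative linear functionals on A
  (functionals are taken extensional, i.e. determined by their values on A).\<close>

definition mult_lin_functionals :: "('k \<Rightarrow> complex) set \<Rightarrow> (('k \<Rightarrow> complex) \<Rightarrow> complex) set" where
  "mult_lin_functionals A = {\<phi>. \<phi> \<in> extensional A
     \<and> (\<forall>f\<in>A. \<forall>g\<in>A. \<phi> (\<lambda>x. f x + g x) = \<phi> f + \<phi> g)
     \<and> (\<forall>f\<in>A. \<forall>c. \<phi> (\<lambda>x. c * f x) = c * \<phi> f)
     \<and> (\<forall>f\<in>A. \<forall>g\<in>A. \<phi> (\<lambda>x. f x * g x) = \<phi> f * \<phi> g)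
     \<and> (\<exists>f\<in>A. \<phi> f \<noteq> 0)}"

definition gelfand_topology :: "('k \<Rightarrow> complex) set \<Rightarrow> (('k \<Rightarrow> complex) \<Rightarrow> complex) topology" where
  "gelfand_topology A = topology_generated_by
     ({{\<phi> \<in> mult_lin_functionals A. \<phi> a \<in> U} | a U. a \<in> A \<and> open U}
      \<union> {mult_lin_functionals A})"

end

theory Submission
  imports Defs
begin

(*
  A multiplicative linear functional on a uniform algebra is bounded by the sup norm: if
  |\<phi> g| > sup |g| then h = g / \<phi> g satisfies sup |h| < 1, so 1 - h is invertible in A by the
  Neumann series, although \<phi> (1 - h) = 0.  Hence \<phi> is 1-Lipschitz for the sup distance.

  Since K is compact metric, C(K) and therefore A contain a countable uniformly dense family
  (e k).  For fixed n, the least k with sup |f \<omega> - e k| \<le> 1/(n+1) depends measurably on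
  \<omega>, because by continuity the supremum may be taken over a countable dense subset of K; then
  \<phi> (e k) converges to \<phi> (f \<omega>).
*)

context
  fixes A :: "('k::metric_space \<Rightarrow> complex) set"
  assumes ua: "uniform_algebra A"
begin

lemma uniform_algebra_continuous: "g \<in> A \<Longrightarrow> continuous_on UNIV g"
  using ua by (auto simp: uniform_algebra_def)

lemma uniform_algebra_add: "f \<in> A \<Longrightarrow> g \<in> A \<Longrightarrow> (\<lambda>x. f x + g x) \<in> A"
  using ua by (simp add: uniform_algebra_def)

lemma uniform_algebra_cmult: "f \<in> A \<Longrightarrow> (\<lambda>x. c * f x) \<in> A"
  using ua by (simp add: uniform_algebra_def)

lemma uniform_algebra_mult: "f \<in> A \<Longrightarrow> g \<in> A \<Longrightarrow> (\<lambda>x. f x * g x) \<in> A"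
  using ua by (simp add: uniform_algebra_def)

lemma uniform_algebra_const: "(\<lambda>_. c) \<in> A"
  using ua by (simp add: uniform_algebra_def)

lemma uniform_algebra_uniform_limit:
  "(\<And>n. s n \<in> A) \<Longrightarrow> uniform_limit UNIV s g sequentially \<Longrightarrow> g \<in> A"
  using ua unfolding uniform_algebra_def by blast

lemma uniform_algebra_diff: "f \<in> A \<Longrightarrow> g \<in> A \<Longrightarrow> (\<lambda>x. f x - g x) \<in> A"
  using uniform_algebra_add[of f "\<lambda>x. (-1) * g x"] uniform_algebra_cmult[of g "-1"] by simp

lemma uniform_algebra_power: "f \<in> A \<Longrightarrow> (\<lambda>x. f x ^ n) \<in> A"
  by (induction n) (simp_all add: uniform_algebra_const uniform_algebra_mult)

lemma uniform_algebra_sum: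
  "finite I \<Longrightarrow> (\<And>i. i \<in> I \<Longrightarrow> F i \<in> A) \<Longrightarrow> (\<lambda>x. \<Sum>i\<in>I. F i x) \<in> A"
  by (induction I rule: finite_induct) (simp_all add: uniform_algebra_const uniform_algebra_add)

lemma uniform_algebra_inverse_one_minus:
  assumes h: "h \<in> A" and r: "\<And>x. norm (h x) \<le> r" "r < 1"
  shows "(\<lambda>x. inverse (1 - h x)) \<in> A"
proof (rule uniform_algebra_uniform_limit)
  show "(\<lambda>x. \<Sum>i<n. h x ^ i) \<in> A" for n
    by (intro uniform_algebra_sum uniform_algebra_power h) simp
  have "0 \<le> r"
    using r(1) norm_ge_zero order_trans by blast
  then have summable: "summable (\<lambda>n. r ^ n)"
    using r(2) by (intro summable_geometric) simp
  have "uniform_limit UNIV (\<lambda>n x. \<Sum>i<n. h x ^ i) (\<lambda>x. \<Sum>i. h x ^ i) sequentially"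
    by (rule Weierstrass_m_test[OF _ summable]) (simp add: norm_power power_mono r(1))
  moreover have "(\<Sum>i. h x ^ i) = inverse (1 - h x)" for x
    using geometric_sums[of "h x"] r(1)[of x] r(2) by (simp add: sums_iff divide_inverse)
  ultimately show "uniform_limit UNIV (\<lambda>n x. \<Sum>i<n. h x ^ i) (\<lambda>x. inverse (1 - h x)) sequentially"
    by simp
qed

context
  fixes \<phi> :: "('k \<Rightarrow> complex) \<Rightarrow> complex"
  assumes \<phi>: "\<phi> \<in> mult_lin_functionals A"
begin

lemma mult_lin_functional_add: "f \<in> A \<Longrightarrow> g \<in> A \<Longrightarrow> \<phi> (\<lambda>x. f x + g x) = \<phi> f + \<phi> g"
  using \<phi> by (simp add: mult_lin_functionals_def)

lemma mult_lin_functional_cmult: "f \<in> A \<Longrightarrow> \<phi> (\<lambda>x. c * f x) = c * \<phi> f"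
  using \<phi> by (simp add: mult_lin_functionals_def)

lemma mult_lin_functional_mult: "f \<in> A \<Longrightarrow> g \<in> A \<Longrightarrow> \<phi> (\<lambda>x. f x * g x) = \<phi> f * \<phi> g"
  using \<phi> by (simp add: mult_lin_functionals_def)

lemma mult_lin_functional_const: "\<phi> (\<lambda>_. c) = c"
proof -
  obtain g where g: "g \<in> A" "\<phi> g \<noteq> 0"
    using \<phi> by (auto simp: mult_lin_functionals_def)
  have "\<phi> g = \<phi> (\<lambda>_. 1) * \<phi> g"
    using mult_lin_functional_mult[OF uniform_algebra_const[of 1] g(1)] by simp
  then have "\<phi> (\<lambda>_. 1) = 1"
    using g(2) by (metis mult_cancel_right2)
  then show ?thesis
    using mult_lin_functional_cmult[OF uniform_algebra_const, of c 1] by simp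
qed

lemma mult_lin_functional_diff: "f \<in> A \<Longrightarrow> g \<in> A \<Longrightarrow> \<phi> (\<lambda>x. f x - g x) = \<phi> f - \<phi> g"
  using mult_lin_functional_add[of f "\<lambda>x. (-1) * g x"] mult_lin_functional_cmult[of g "-1"]
    uniform_algebra_cmult[of g "-1"] by simp

lemma mult_lin_functional_norm_le:
  assumes g: "g \<in> A" and B: "\<And>x. norm (g x) \<le> B"
  shows "norm (\<phi> g) \<le> B"
proof (rule ccontr)
  assume "\<not> norm (\<phi> g) \<le> B"
  then have less: "B < norm (\<phi> g)" by simp
  have "0 \<le> B"
    using B norm_ge_zero order_trans by blast
  with less have nonzero: "\<phi> g \<noteq> 0" by auto
  define h where "h = (\<lambda>x. g x / \<phi> g)"
  have hA: "h \<in> A"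
    using uniform_algebra_cmult[OF g, of "inverse (\<phi> g)"]
    by (simp add: h_def divide_inverse mult.commute)
  have h_bound: "norm (h x) \<le> B / norm (\<phi> g)" for x
    using B[of x] less by (simp add: h_def norm_divide divide_right_mono)
  have ratio_less: "B / norm (\<phi> g) < 1"
    using less by (simp add: divide_less_eq)
  have inv: "(\<lambda>x. inverse (1 - h x)) \<in> A"
    using h_bound ratio_less by (rule uniform_algebra_inverse_one_minus[OF hA])
  have one_minus: "(\<lambda>x. 1 - h x) \<in> A"
    by (intro uniform_algebra_diff uniform_algebra_const hA)
  have "\<phi> h = 1"
    using mult_lin_functional_cmult[OF g, of "inverse (\<phi> g)"] nonzero
    by (simp add: h_def divide_inverse mult.commute)
  then have "\<phi> (\<lambda>x. 1 - h x) = 0"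
    by (simp add: mult_lin_functional_diff[OF uniform_algebra_const hA] mult_lin_functional_const)
  then have "\<phi> (\<lambda>x. (1 - h x) * inverse (1 - h x)) = 0"
    using mult_lin_functional_mult[OF one_minus inv] by simp
  moreover have "h x \<noteq> 1" for x
    using h_bound[of x] ratio_less by auto
  ultimately have "\<phi> (\<lambda>_. 1) = 0"
    by simp
  then show False
    by (simp add: mult_lin_functional_const)
qed

lemma mult_lin_functional_dist_le:
  assumes "f \<in> A" "g \<in> A" and "\<And>x. dist (f x) (g x) \<le> r"
  shows "dist (\<phi> f) (\<phi> g) \<le> r"
proof -
  have "norm (\<phi> (\<lambda>x. f x - g x)) \<le> r"
    using assms by (intro mult_lin_functional_norm_le uniform_algebra_diff) (simp_all add: dist_norm)
  then show ?thesis
    using mult_lin_functional_diff[OF assms(1,2)] by (simp add: dist_norm)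
qed

end

end

lemma continuous_map_gelfand_evaluation:
  assumes "a \<in> A"
  shows "continuous_map (gelfand_topology A) euclidean (\<lambda>\<phi>. \<phi> a)"
proof -
  have top: "topspace (gelfand_topology A) = mult_lin_functionals A"
    unfolding gelfand_topology_def by auto
  have "openin (gelfand_topology A) {\<phi> \<in> mult_lin_functionals A. \<phi> a \<in> U}" if "open U" for U
    unfolding gelfand_topology_def using assms that by (intro topology_generated_by_Basis) blast
  then show ?thesis
    by (auto simp: continuous_map top)
qed

definition uniformly_approximates :: "(nat \<Rightarrow> 'k \<Rightarrow> 'b::metric_space) \<Rightarrow> ('k \<Rightarrow> 'b) set \<Rightarrow> bool" where
  "uniformly_approximates F S \<longleftrightarrow> (\<forall>g\<in>S. \<forall>\<epsilon>>0. \<exists>k. \<forall>x. dist (g x) (F k x) < \<epsilon>)"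

lemma uniformly_approximatesD:
  "uniformly_approximates F S \<Longrightarrow> g \<in> S \<Longrightarrow> 0 < \<epsilon> \<Longrightarrow> \<exists>k. \<forall>x. dist (g x) (F k x) < \<epsilon>"
  unfolding uniformly_approximates_def by blast

lemma uniformly_approximates_mono:
  "uniformly_approximates F S \<Longrightarrow> T \<subseteq> S \<Longrightarrow> uniformly_approximates F T"
  unfolding uniformly_approximates_def by blast

lemma compact_finite_net:
  assumes "compact (UNIV :: 'k::metric_space set)" and "0 < r"
  shows "\<exists>L :: 'k list. \<forall>x. \<exists>i<length L. dist x (L ! i) < r"
proof -
  have "UNIV \<subseteq> (\<Union>y. ball y r)"
    using assms(2) by auto
  then obtain C :: "'k set" where "finite C" and cover: "UNIV \<subseteq> (\<Union>y\<in>C. ball y r)"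
    by (metis compactE_image[OF assms(1), of UNIV "\<lambda>y. ball y r"] open_ball)
  then obtain L where L: "set L = C"
    using finite_list by blast
  have "\<exists>i<length L. dist x (L ! i) < r" for x
  proof -
    obtain y where "y \<in> C" "dist y x < r"
      using cover by (auto simp: subset_eq)
    then show ?thesis
      using L by (auto simp: in_set_conv_nth dist_commute)
  qed
  then show ?thesis
    by blast
qed

lemma compact_finite_nets:
  assumes "compact (UNIV :: 'k::metric_space set)"
  obtains net :: "nat \<Rightarrow> 'k::metric_space list"
  where "\<And>n x. \<exists>i<length (net n). dist x (net n ! i) < inverse (real (Suc n))"
proof -
  have "\<forall>n. \<exists>L :: 'k list. \<forall>x. \<exists>i<length L. dist x (L ! i) < inverse (real (Suc n))"
    using compact_finite_net[OF assms] by simp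
  then show ?thesis
    using that by metis
qed

lemma compact_countable_dense:
  assumes "compact (UNIV :: 'k::metric_space set)"
  obtains D :: "'k::metric_space set" where "countable D" "closure D = UNIV"
proof -
  obtain net :: "nat \<Rightarrow> 'k list"
    where net: "\<And>n x. \<exists>i<length (net n). dist x (net n ! i) < inverse (real (Suc n))"
    using compact_finite_nets[OF assms] by blast
  have "x \<in> closure (\<Union>n. set (net n))" for x
  proof (unfold closure_approachable, intro allI impI)
    fix r :: real assume "0 < r"
    then obtain n where "inverse (real (Suc n)) < r"
      using reals_Archimedean by blast
    moreover obtain i where "i < length (net n)" "dist x (net n ! i) < inverse (real (Suc n))"
      using net by blast
    ultimately show "\<exists>y\<in>\<Union>n. set (net n). dist y x < r"
      by (intro bexI[of _ "net n ! i"]) (auto simp: dist_commute intro: nth_mem)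
  qed
  moreover have "countable (\<Union>n. set (net n))"
    by (rule countable_UN) (simp_all add: countable_finite)
  ultimately show ?thesis
    using that by blast
qed

lemma metric_dense_sequence:
  obtains d :: "nat \<Rightarrow> 'b::{metric_space, second_countable_topology}"
  where "\<And>y \<epsilon>. 0 < \<epsilon> \<Longrightarrow> \<exists>j. dist y (d j) < \<epsilon>"
proof -
  obtain T :: "'b set" where T: "countable T" "UNIV \<subseteq> closure T"
    by (rule separable[of UNIV])
  have "\<exists>j. dist y (from_nat_into T j) < \<epsilon>" if "0 < \<epsilon>" for y \<epsilon>
  proof -
    have "y \<in> closure T"
      using T(2) by blast
    then obtain t where "t \<in> T" "dist t y < \<epsilon>"
      using \<open>0 < \<epsilon>\<close> unfolding closure_approachable by blast
    moreover obtain j where "from_nat_into T j = t"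
      using from_nat_into_surj[OF T(1) \<open>t \<in> T\<close>] by blast
    ultimately show ?thesis
      by (auto simp: dist_commute)
  qed
  then show ?thesis
    by (rule that)
qed

lemma compact_continuous_uniformly_approximates:
  assumes "compact (UNIV :: 'k::metric_space set)"
  obtains F :: "nat \<Rightarrow> 'k::metric_space \<Rightarrow> 'b::{metric_space, second_countable_topology}"
  where "uniformly_approximates F {g. continuous_on UNIV g}"
proof -
  obtain net :: "nat \<Rightarrow> 'k list"
    where net: "\<And>n x. \<exists>i<length (net n). dist x (net n ! i) < inverse (real (Suc n))"
    using compact_finite_nets[OF assms] by blast
  obtain d :: "nat \<Rightarrow> 'b" where d: "\<And>y \<epsilon>. 0 < \<epsilon> \<Longrightarrow> \<exists>j. dist y (d j) < \<epsilon>"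
    using metric_dense_sequence by blast
  define idx
    where "idx n x = (SOME i. i < length (net n) \<and> dist x (net n ! i) < inverse (real (Suc n)))" for n x
  have idx: "idx n x < length (net n)" "dist x (net n ! idx n x) < inverse (real (Suc n))" for n x
    using someI_ex[OF net[of n x]] unfolding idx_def by blast+
  \<comment> \<open>a step function, constant \<open>d (js ! i)\<close> near the \<open>i\<close>-th point of the \<open>n\<close>-th net\<close>
  define step :: "nat \<times> nat list \<Rightarrow> 'k \<Rightarrow> 'b" where "step = (\<lambda>(n, js) x. d (js ! idx n x))"
  have "uniformly_approximates (step \<circ> from_nat) {g. continuous_on UNIV g}"
    unfolding uniformly_approximates_def
  proof (intro ballI allI impI)
    fix g :: "'k \<Rightarrow> 'b" and \<epsilon> :: real
    assume "g \<in> {g. continuous_on UNIV g}" and "0 < \<epsilon>"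
    then have "uniformly_continuous_on UNIV g"
      using compact_uniformly_continuous assms by blast
    then obtain \<delta> where "0 < \<delta>" and \<delta>: "\<And>x x'. dist x' x < \<delta> \<Longrightarrow> dist (g x') (g x) < \<epsilon>/2"
      using \<open>0 < \<epsilon>\<close> unfolding uniformly_continuous_on_def by (metis half_gt_zero UNIV_I)
    obtain n where n: "inverse (real (Suc n)) < \<delta>"
      using reals_Archimedean[OF \<open>0 < \<delta>\<close>] by blast
    have "\<forall>y. \<exists>j. dist (g y) (d j) < \<epsilon>/2"
      using d \<open>0 < \<epsilon>\<close> half_gt_zero by blast
    then obtain j where j: "\<And>y. dist (g y) (d (j y)) < \<epsilon>/2"
      by metis
    have "dist (g x) (step (n, map j (net n)) x) < \<epsilon>" for x
    proof -
      let ?y = "net n ! idx n x"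
      have "dist ?y x < \<delta>"
        using idx(2) n less_trans by (metis dist_commute)
      then have "dist (g ?y) (g x) < \<epsilon>/2"
        by (rule \<delta>)
      moreover have "step (n, map j (net n)) x = d (j ?y)"
        using idx(1) by (simp add: step_def)
      ultimately show ?thesis
        using dist_triangle_half_r[OF _ j[of ?y]] by simp
    qed
    then show "\<exists>k. \<forall>x. dist (g x) ((step \<circ> from_nat) k x) < \<epsilon>"
      by (intro exI[of _ "to_nat (n, map j (net n))"]) simp
  qed
  then show ?thesis
    using that by blast
qed

lemma uniformly_approximates_by_members:
  assumes F: "uniformly_approximates F S" and "S \<noteq> {}"
  obtains e where "range e \<subseteq> S" "uniformly_approximates e S"
proof -
  define near where "near k m = {t \<in> S. \<forall>x. dist (F k x) (t x) < inverse (real (Suc m))}" for k m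
  define pick where "pick = (\<lambda>(k, m). if near k m \<noteq> {} then SOME t. t \<in> near k m else SOME t. t \<in> S)"
  have pick_near: "pick (k, m) \<in> near k m" if "near k m \<noteq> {}" for k m
    using that by (simp add: pick_def some_in_eq)
  have pick_in: "pick p \<in> S" for p
    using \<open>S \<noteq> {}\<close> pick_near by (cases p) (auto simp: pick_def near_def some_in_eq)
  then have "range (pick \<circ> from_nat) \<subseteq> S"
    by (simp add: image_subset_iff)
  moreover have "uniformly_approximates (pick \<circ> from_nat) S"
    unfolding uniformly_approximates_def
  proof (intro ballI allI impI)
    fix g and \<epsilon> :: real
    assume "g \<in> S" and "0 < \<epsilon>"
    obtain m where m: "inverse (real (Suc m)) < \<epsilon>/2"
      using reals_Archimedean[of "\<epsilon>/2"] \<open>0 < \<epsilon>\<close> by auto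
    obtain k where "\<forall>x. dist (g x) (F k x) < inverse (real (Suc m))"
      using uniformly_approximatesD[OF F \<open>g \<in> S\<close>, of "inverse (real (Suc m))"] by auto
    then have "g \<in> near k m"
      using \<open>g \<in> S\<close> by (simp add: near_def dist_commute)
    then have "pick (k, m) \<in> near k m"
      using pick_near by blast
    then have "dist (F k x) (g x) < inverse (real (Suc m))"
      and "dist (F k x) (pick (k, m) x) < inverse (real (Suc m))" for x
      using \<open>g \<in> near k m\<close> by (auto simp: near_def)
    then have "dist (F k x) (g x) < \<epsilon>/2" "dist (F k x) (pick (k, m) x) < \<epsilon>/2" for x
      by (blast intro: less_trans[OF _ m])+
    then have "dist (g x) (pick (k, m) x) < \<epsilon>" for x
      by (rule dist_triangle_half_r)
    then show "\<exists>k. \<forall>x. dist (g x) ((pick \<circ> from_nat) k x) < \<epsilon>"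
      by (intro exI[of _ "to_nat (k, m)"]) simp
  qed
  ultimately show ?thesis
    by (rule that)
qed

lemma uniform_algebra_uniformly_approximated:
  assumes "compact (UNIV :: 'k::metric_space set)" and "uniform_algebra A"
  obtains e :: "nat \<Rightarrow> 'k::metric_space \<Rightarrow> complex" where "range e \<subseteq> A" "uniformly_approximates e A"
proof -
  obtain F :: "nat \<Rightarrow> 'k \<Rightarrow> complex" where "uniformly_approximates F {g. continuous_on UNIV g}"
    using compact_continuous_uniformly_approximates[OF assms(1)] by blast
  then have "uniformly_approximates F A"
    using uniform_algebra_continuous[OF assms(2)] by (blast intro: uniformly_approximates_mono)
  then show ?thesis
    using that uniformly_approximates_by_members uniform_algebra_const[OF assms(2)] by blast
qed

lemma borel_measurable_sup_Lipschitz_functional: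
  fixes f :: "'w \<Rightarrow> 'k::topological_space \<Rightarrow> 'b::{metric_space, second_countable_topology}"
    and \<Phi> :: "('k \<Rightarrow> 'b) \<Rightarrow> 'c::metric_space"
    and D :: "'k set"
  assumes D: "countable D" "closure D = UNIV"
    and cont_f: "\<And>\<omega>. continuous_on UNIV (f \<omega>)" and cont_e: "\<And>k. continuous_on UNIV (e k)"
    and meas[measurable]: "\<And>z. (\<lambda>\<omega>. f \<omega> z) \<in> borel_measurable \<Omega>"
    and approx: "uniformly_approximates e (range f)"
    and Lipschitz: "\<And>\<omega> k r. (\<And>x. dist (f \<omega> x) (e k x) \<le> r) \<Longrightarrow> dist (\<Phi> (f \<omega>)) (\<Phi> (e k)) \<le> r"
  shows "(\<lambda>\<omega>. \<Phi> (f \<omega>)) \<in> borel_measurable \<Omega>"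
proof -
  define close where "close n k \<omega> \<longleftrightarrow> (\<forall>x. dist (f \<omega> x) (e k x) \<le> inverse (real (Suc n)))" for n k \<omega>
  have close_on_dense: "close n k = (\<lambda>\<omega>. \<forall>x\<in>D. dist (f \<omega> x) (e k x) \<le> inverse (real (Suc n)))" for n k
  proof (intro ext iffI)
    fix \<omega>
    assume on_D: "\<forall>x\<in>D. dist (f \<omega> x) (e k x) \<le> inverse (real (Suc n))"
    have cont: "continuous_on (closure D) (\<lambda>x. dist (f \<omega> x) (e k x))"
      using cont_f cont_e D(2) by (intro continuous_on_dist) simp_all
    show "close n k \<omega>"
      unfolding close_def
    proof
      fix x
      show "dist (f \<omega> x) (e k x) \<le> inverse (real (Suc n))"
        by (rule continuous_le_on_closure[OF cont]) (use on_D D(2) in auto)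
    qed
  qed (simp add: close_def)
  have [measurable]: "Measurable.pred \<Omega> (close n k)" for n k
    unfolding close_on_dense using D(1) by measurable
  define kn where "kn n \<omega> = (LEAST k. close n k \<omega>)" for n \<omega>
  have close_kn: "close n (kn n \<omega>) \<omega>" for n \<omega>
  proof -
    obtain k where "\<forall>x. dist (f \<omega> x) (e k x) < inverse (real (Suc n))"
      using uniformly_approximatesD[OF approx, of "f \<omega>" "inverse (real (Suc n))"] by auto
    then have "close n k \<omega>"
      by (simp add: close_def less_imp_le)
    then show ?thesis
      unfolding kn_def by (rule LeastI)
  qed
  have [measurable]: "kn n \<in> \<Omega> \<rightarrow>\<^sub>M count_space UNIV" for n
    unfolding kn_def by measurable
  have "(\<lambda>\<omega>. \<Phi> (e (kn n \<omega>))) \<in> borel_measurable \<Omega>" for n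
    by (rule measurable_compose_countable[where f="\<lambda>k \<omega>. \<Phi> (e k)"]) simp_all
  moreover have "(\<lambda>n. \<Phi> (e (kn n \<omega>))) \<longlonglongrightarrow> \<Phi> (f \<omega>)" for \<omega>
  proof -
    have "dist (\<Phi> (f \<omega>)) (\<Phi> (e (kn n \<omega>))) \<le> inverse (real (Suc n))" for n
      using close_kn[of n \<omega>] unfolding close_def by (intro Lipschitz) blast
    then have "dist (\<Phi> (e (kn n \<omega>))) (\<Phi> (f \<omega>)) \<le> inverse (real (Suc n))" for n
      by (simp add: dist_commute)
    then have "(\<lambda>n. dist (\<Phi> (e (kn n \<omega>))) (\<Phi> (f \<omega>))) \<longlonglongrightarrow> 0"
      by (intro real_tendsto_sandwich[OF _ _ tendsto_const LIMSEQ_inverse_real_of_nat]) simp_all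
    then show ?thesis
      by (rule tendsto_dist_iff[THEN iffD2])
  qed
  ultimately show ?thesis
    by (rule borel_measurable_LIMSEQ_metric)
qed

theorem proposition5p4:
  fixes \<Omega> :: "'w measure"
    and A :: "('k::metric_space \<Rightarrow> complex) set"
    and f :: "'w \<Rightarrow> 'k \<Rightarrow> complex"
  assumes "compact (UNIV :: 'k set)"
    and "uniform_algebra A"
    and "\<And>\<omega>. f \<omega> \<in> A"
    and "\<And>z. (\<lambda>\<omega>. f \<omega> z) \<in> borel_measurable \<Omega>"
  shows "(\<forall>\<phi>\<in>mult_lin_functionals A. (\<lambda>\<omega>. \<phi> (f \<omega>)) \<in> borel_measurable \<Omega>)
       \<and> (\<forall>\<omega>. continuous_map (gelfand_topology A) euclidean (\<lambda>\<phi>. \<phi> (f \<omega>)))"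
proof (intro conjI ballI allI continuous_map_gelfand_evaluation assms(3))
  fix \<phi> assume \<phi>: "\<phi> \<in> mult_lin_functionals A"
  obtain D :: "'k set" where D: "countable D" "closure D = UNIV"
    using compact_countable_dense[OF assms(1)] by blast
  obtain e where e: "range e \<subseteq> A" "uniformly_approximates e A"
    using uniform_algebra_uniformly_approximated[OF assms(1,2)] by blast
  show "(\<lambda>\<omega>. \<phi> (f \<omega>)) \<in> borel_measurable \<Omega>"
  proof (rule borel_measurable_sup_Lipschitz_functional[OF D _ _ assms(4)])
    show "continuous_on UNIV (f \<omega>)" for \<omega>
      by (rule uniform_algebra_continuous[OF assms(2,3)])
    show "continuous_on UNIV (e k)" for k
      using e(1) by (intro uniform_algebra_continuous[OF assms(2)]) blast
    show "uniformly_approximates e (range f)"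
      using e(2) assms(3) by (blast intro: uniformly_approximates_mono)
    show "dist (\<phi> (f \<omega>)) (\<phi> (e k)) \<le> r" if "\<And>x. dist (f \<omega> x) (e k x) \<le> r" for \<omega> k r
      using e(1) that by (intro mult_lin_functional_dist_le[OF assms(2) \<phi> assms(3)]) blast+
  qed
qed

end
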